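(* For all integers $m,n\ge1$, all functions $\Psi_1,\dots,\Psi_m:\mathbb{Z}^n\to\mathbb{R}_{>0}$ and each $\circ\in\{\ ,\ ',\ ''\}$, the set $\mathcal{F}^\circ_{n,m}(\Psi_1,\dots,\Psi_m)=\bigcup_{k=1}^\infty\mathcal{A}^\circ_{n,m}(k\Psi_1,\dots,k\Psi_m)$ has Lebesgue measure $0$ or $1$.
   Context: Let $m,n\ge1$ be integers. Points $\mathbf{X}\in[0,1]^{nm}$ are regarded as real $n\times m$ matrices with columns $\mathbf{X}^{(1)},\dots,\mathbf{X}^{(m)}$, and $\mathbf{q}\in\mathbb{Z}^n$ as a row vector. For $\Psi_1,\dots,\Psi_m:\mathbb{Z}^n\to\mathbb{R}_{>0}$ consider the system ( ** ) $|\mathbf{q}\mathbf{X}^{(j)}+p_j|<\Psi_j(\mathbf{q})$ for all $j=1,\dots,m$, with $\mathbf{p}=(p_1,\dots,p_m)\in\mathbb{Z}^m$, $\mathbf{q}\in\mathbb{Z}^n\setminus\{\mathbf{0}\}$. $\mathcal{A}_{n,m}(\Psi_1,\dots,\Psi_m)$ is the set of $\mathbf{X}\in[0,1]^{nm}$ for which ( ** ) holds for infinitely many $(\mathbf{p},\mathbf{q})$; $\mathcal{A}'_{n,m}(\Psi_1,\dots,\Psi_m)$ is the same with the additional requirement $\gcd(\mathbf{p},\mathbf{q})=1$ (gcd of all components of $\mathbf{p}$ and $\mathbf{q}$); $\mathcal{A}''_{n,m}(\Psi_1,\dots,\Psi_m)$ is the same with the additional requirement $\gcd(p_j,\mathbf{q})=1$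 for every $j=1,\dots,m$. $\mathcal{A}^\circ_{n,m}$ denotes any one of these three sets, and $k\Psi_j$ is $\mathbf{q}\mapsto k\Psi_j(\mathbf{q})$. *)

theory Defs
  imports "HOL-Analysis.Analysis"
begin

text \<open>An n x m real matrix X is an element of real^'m^'n (row index 'n, column index 'm);
  column j of X is (\<lambda>i. X$i$j).\<close>

datatype coprimality = NoCond | GcdAll | GcdEach

definition linform :: "int^'n \<Rightarrow> real^'m^'n \<Rightarrow> 'm \<Rightarrow> real" where
  "linform q X j = (\<Sum>i\<in>UNIV. real_of_int (q $ i) * X $ i $ j)"

definition unit_cube_mat :: "(real^'m^'n) set" where
  "unit_cube_mat = {X. \<forall>i j. 0 \<le> X $ i $ j \<and> X $ i $ j \<le> 1}"

fun cond_ok :: "coprimality \<Rightarrow> int^'m \<Rightarrow> int^'n \<Rightarrow> bool" where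
  "cond_ok NoCond p q = True"
| "cond_ok GcdAll p q = (Gcd (range (\<lambda>j. p $ j) \<union> range (\<lambda>i. q $ i)) = 1)"
| "cond_ok GcdEach p q = (\<forall>j. Gcd (insert (p $ j) (range (\<lambda>i. q $ i))) = 1)"

definition approx_set :: "coprimality \<Rightarrow> ('m \<Rightarrow> int^'n \<Rightarrow> real) \<Rightarrow> (real^'m^'n) set" where
  "approx_set c \<Psi> = {X \<in> unit_cube_mat.
      infinite {(p :: int^'m, q :: int^'n). q \<noteq> 0 \<and> cond_ok c p q \<and>
                 (\<forall>j. \<bar>linform q X j + real_of_int (p $ j)\<bar> < \<Psi> j q)}}"

definition F_set :: "coprimality \<Rightarrow> ('m \<Rightarrow> int^'n \<Rightarrow> real) \<Rightarrow> (real^'m^'n) set" where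
  "F_set c \<Psi> = (\<Union>k\<in>{1::nat..}. approx_set c (\<lambda>j q. real k * \<Psi> j q))"

end

theory Submission
  imports Defs "HOL-Analysis.Analysis"
begin

(* Part 1 (arbitrary euclidean_space) proves that a measurable lattice-periodic set P is null
   or conull if either
     (a) P is invariant under x \<mapsto> l x + R for an integer l \<ge> 2
         (dilation_invariant_null_or_conull, affine_dilation_invariant_null_or_conull), or
     (b) P is almost invariant under the translations by (1/N) \<int>^d for infinitely many N
         (translation_invariant_null_or_conull).
   Both rest on a density criterion (density_zero_one): if along infinitely many meshes 1/N the
   density of P in every grid cell is at most its density in the unit cube, then that density
   is 0 or 1; it is proved by approximating P from outside by an open set and that open set from
   inside by grid cells.

   Part 2 applies this to F_ext, the set of all real n \<times> m matrices (not only those in the unit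
   cube) having infinitely many solutions for some k; it is measurable and \<int>^{nm}-periodic.  For
   a prime l the denominators q fall into classes (in_div_class): l does not divide q; l divides
   q but l^2 does not divide q_i; l^2 divides q.  The maps X \<mapsto> l X and X \<mapsto> l X + row_shift l i
   preserve the first two parts of F_ext, which are therefore null or conull by (a).  If one of
   them is conull for some prime, so is F_ext; otherwise F_ext agrees up to null sets with its
   third part for every prime, and that part is invariant under X \<mapsto> X + Z/l, so (b) applies
   along the primes.  The theorem follows since F is F_ext intersected with the unit cube. *)

text \<open>Half-open boxes \<open>[l, u)\<close> tile space without overlaps; they are the cells of the grids below.\<close>
definition half_open_box :: "'a::euclidean_space \<Rightarrow> 'a \<Rightarrow> 'a set" where
  "half_open_box l u = {x. \<forall>b\<in>Basis. l \<bullet> b \<le> x \<bullet> b \<and> x \<bullet> b < u \<bullet> b}"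

lemma sets_lebesgue_if_borel: "A \<in> sets borel \<Longrightarrow> A \<in> sets lebesgue"
  by (metis sets_completionI_sets sets_lborel)

lemma Int_fmeasurable: "S \<in> sets M \<Longrightarrow> T \<in> fmeasurable M \<Longrightarrow> S \<inter> T \<in> fmeasurable M"
  by (metis fmeasurable_Int_fmeasurable inf_commute)

lemma half_open_box_borel: "half_open_box l u \<in> sets borel"
proof -
  have "half_open_box l u = (\<Inter>b\<in>Basis. {x. l \<bullet> b \<le> x \<bullet> b} \<inter> {x. x \<bullet> b < u \<bullet> b})"
    by (auto simp: half_open_box_def)
  also have "\<dots> \<in> sets borel"
    by (intro sets.finite_INT)
       (auto intro!: sets.Int borel_closed borel_open closed_halfspace_component_ge
                     open_halfspace_component_lt)
  finally show ?thesis .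
qed

lemma half_open_box_lebesgue: "half_open_box l u \<in> sets lebesgue"
  by (simp add: half_open_box_borel sets_lebesgue_if_borel)

text \<open>A half-open box lies between the open and the closed box, which have the same volume.\<close>
lemma emeasure_half_open_box:
  assumes "\<And>b. b \<in> Basis \<Longrightarrow> l \<bullet> b \<le> u \<bullet> b"
  shows "emeasure lebesgue (half_open_box l u) = (\<Prod>b\<in>Basis. (u - l) \<bullet> b)"
proof -
  have sub: "box l u \<subseteq> half_open_box l u" "half_open_box l u \<subseteq> cbox l u"
    by (auto simp: half_open_box_def mem_box; meson less_imp_le)+
  have "emeasure lebesgue (box l u) = (\<Prod>b\<in>Basis. (u - l) \<bullet> b)"
       "emeasure lebesgue (cbox l u) = (\<Prod>b\<in>Basis. (u - l) \<bullet> b)"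
    using assms by (simp_all add: emeasure_lborel_box_eq emeasure_lborel_cbox_eq emeasure_completion)
  then show ?thesis
    using emeasure_mono[OF sub(1) half_open_box_lebesgue] emeasure_mono[OF sub(2)]
    by (metis antisym fmeasurableD lmeasurable_cbox)
qed

definition int_lattice :: "'a::euclidean_space set" where
  "int_lattice = {z. \<forall>b\<in>Basis. z \<bullet> b \<in> \<int>}"

definition lattice_periodic :: "'a::euclidean_space set \<Rightarrow> bool" where
  "lattice_periodic P \<longleftrightarrow> (\<forall>x z. z \<in> int_lattice \<longrightarrow> (x + z \<in> P \<longleftrightarrow> x \<in> P))"

definition unit_box :: "'a::euclidean_space set" where
  "unit_box = half_open_box 0 One"

definition lattice_floor :: "'a::euclidean_space \<Rightarrow> 'a" where
  "lattice_floor x = (\<Sum>b\<in>Basis. of_int \<lfloor>x \<bullet> b\<rfloor> *\<^sub>R b)"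

lemma inner_lattice_floor: "b \<in> Basis \<Longrightarrow> lattice_floor x \<bullet> b = of_int \<lfloor>x \<bullet> b\<rfloor>"
  by (simp add: lattice_floor_def inner_sum_left inner_Basis if_distrib cong: if_cong)

lemma lattice_floor_in_lattice: "lattice_floor x \<in> int_lattice"
  by (simp add: int_lattice_def inner_lattice_floor)

lemma int_lattice_minus: "z \<in> int_lattice \<Longrightarrow> - z \<in> int_lattice"
  by (auto simp: int_lattice_def)

lemma mem_unit_box: "x \<in> unit_box \<longleftrightarrow> (\<forall>b\<in>Basis. 0 \<le> x \<bullet> b \<and> x \<bullet> b < 1)"
  by (simp add: unit_box_def half_open_box_def)

lemma minus_lattice_floor_in_unit_box: "x - lattice_floor x \<in> unit_box"
  by (auto simp: mem_unit_box inner_diff_left inner_lattice_floor) linarith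

lemma unit_box_lebesgue: "unit_box \<in> sets lebesgue"
  by (simp add: unit_box_def half_open_box_lebesgue)

lemma emeasure_unit_box: "emeasure lebesgue (unit_box :: 'a::euclidean_space set) = 1"
  by (simp add: unit_box_def emeasure_half_open_box)

lemma unit_box_lmeasurable: "unit_box \<in> lmeasurable"
  by (simp add: fmeasurable_def unit_box_lebesgue emeasure_unit_box)

lemma measure_unit_box: "measure lebesgue (unit_box :: 'a::euclidean_space set) = 1"
  by (simp add: measure_def emeasure_unit_box)

text \<open>Lattice points are determined by their integer coordinates; hence the lattice is
  countable and its bounded parts are finite.\<close>
lemma inj_on_lattice_coords: "inj_on (\<lambda>z. \<lambda>b\<in>Basis. \<lfloor>z \<bullet> b\<rfloor>) int_lattice"
proof (rule inj_onI)
  fix z w :: 'a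
  assume z: "z \<in> int_lattice" and w: "w \<in> int_lattice"
    and eq: "(\<lambda>b\<in>Basis. \<lfloor>z \<bullet> b\<rfloor>) = (\<lambda>b\<in>Basis. \<lfloor>w \<bullet> b\<rfloor>)"
  show "z = w"
  proof (rule euclidean_eqI)
    fix b :: 'a assume b: "b \<in> Basis"
    have "\<lfloor>z \<bullet> b\<rfloor> = \<lfloor>w \<bullet> b\<rfloor>" using fun_cong[OF eq, of b] b by simp
    moreover have "z \<bullet> b \<in> \<int>" "w \<bullet> b \<in> \<int>" using z w b by (auto simp: int_lattice_def)
    ultimately show "z \<bullet> b = w \<bullet> b" by (metis Ints_cases floor_of_int)
  qed
qed

lemma countable_int_lattice: "countable (int_lattice :: 'a::euclidean_space set)"
proof (rule countable_image_inj_on[OF _ inj_on_lattice_coords])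
  show "countable ((\<lambda>z. \<lambda>b\<in>Basis. \<lfloor>z \<bullet> b\<rfloor>) ` (int_lattice :: 'a set))"
    by (rule countable_subset[OF _ countable_PiE[of "Basis :: 'a set" "\<lambda>_. UNIV"]]) auto
qed

text \<open>A periodic set is null as soon as its part in the unit cube is null, because it is
  covered by countably many lattice translates of that part.\<close>
lemma periodic_negligible:
  assumes "lattice_periodic P" "negligible (P \<inter> unit_box)"
  shows "negligible P"
proof -
  have "P \<subseteq> (\<Union>z\<in>int_lattice. (+) z ` (P \<inter> unit_box))"
  proof
    fix x assume x: "x \<in> P"
    have "x - lattice_floor x \<in> P"
      using assms(1) x int_lattice_minus[OF lattice_floor_in_lattice]
      unfolding lattice_periodic_def by (metis diff_conv_add_uminus)
    then have "x \<in> (+) (lattice_floor x) ` (P \<inter> unit_box)"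
      using minus_lattice_floor_in_unit_box by (metis IntI add.commute diff_add_cancel image_eqI)
    then show "x \<in> (\<Union>z\<in>int_lattice. (+) z ` (P \<inter> unit_box))"
      using lattice_floor_in_lattice by blast
  qed
  moreover have "negligible (\<Union>z\<in>int_lattice. (+) z ` (P \<inter> unit_box))"
    by (rule negligible_countable_Union)
       (auto intro: countable_int_lattice negligible_translation assms(2))
  ultimately show ?thesis using negligible_subset by blast
qed

lemma lattice_floor_unique:
  assumes "z \<in> int_lattice" "x - z \<in> unit_box"
  shows "z = lattice_floor x"
proof (rule euclidean_eqI)
  fix b :: 'a assume b: "b \<in> Basis"
  obtain k where k: "z \<bullet> b = of_int k" using assms(1) b by (auto simp: int_lattice_def elim: Ints_cases)
  have "z \<bullet> b \<le> x \<bullet> b" "x \<bullet> b < z \<bullet> b + 1"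
    using assms(2) b by (auto simp: mem_unit_box inner_diff_left)
  then have "\<lfloor>x \<bullet> b\<rfloor> = k" unfolding k by (simp add: floor_eq_iff)
  then show "z \<bullet> b = lattice_floor x \<bullet> b" using b k by (simp add: inner_lattice_floor)
qed

definition grid_points :: "nat \<Rightarrow> 'a::euclidean_space set" where
  "grid_points N = {z \<in> int_lattice. \<forall>b\<in>Basis. 0 \<le> z \<bullet> b \<and> z \<bullet> b < real N}"

definition grid_cell :: "nat \<Rightarrow> 'a::euclidean_space \<Rightarrow> 'a set" where
  "grid_cell N z = half_open_box ((1 / real N) *\<^sub>R z) ((1 / real N) *\<^sub>R (z + One))"

lemma finite_grid_points: "finite (grid_points N :: 'a::euclidean_space set)"
proof (rule finite_imageD)
  show "inj_on (\<lambda>z. \<lambda>b\<in>Basis. \<lfloor>z \<bullet> b\<rfloor>) (grid_points N :: 'a set)"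
    using inj_on_lattice_coords by (rule inj_on_subset) (auto simp: grid_points_def)
  have "\<lfloor>z \<bullet> b\<rfloor> \<in> {0..int N}" if "z \<in> grid_points N" "b \<in> Basis" for z b :: 'a
  proof -
    have "0 \<le> z \<bullet> b" "z \<bullet> b < real N" using that by (auto simp: grid_points_def)
    then show ?thesis by simp linarith
  qed
  then have "(\<lambda>z. \<lambda>b\<in>Basis. \<lfloor>z \<bullet> b\<rfloor>) ` (grid_points N :: 'a set) \<subseteq> PiE Basis (\<lambda>_. {0..int N})"
    by auto
  then show "finite ((\<lambda>z. \<lambda>b\<in>Basis. \<lfloor>z \<bullet> b\<rfloor>) ` (grid_points N :: 'a set))"
    by (rule finite_subset) (auto intro: finite_PiE)
qed

lemma mem_grid_cell: "N > 0 \<Longrightarrow> x \<in> grid_cell N z \<longleftrightarrow> real N *\<^sub>R x - z \<in> unit_box"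
  by (simp add: grid_cell_def half_open_box_def mem_unit_box inner_add_left inner_diff_left field_simps)

lemma grid_cell_lebesgue: "grid_cell N z \<in> sets lebesgue"
  by (simp add: grid_cell_def half_open_box_lebesgue)

lemma grid_cell_affine_image:
  assumes "N > 0"
  shows "grid_cell N z = (\<lambda>y. (1 / real N) *\<^sub>R y + (1 / real N) *\<^sub>R z) ` unit_box"
proof (intro set_eqI iffI)
  fix x :: 'a
  assume "x \<in> grid_cell N z"
  then have "real N *\<^sub>R x - z \<in> unit_box" using assms by (simp add: mem_grid_cell)
  moreover have "x = (1 / real N) *\<^sub>R (real N *\<^sub>R x - z) + (1 / real N) *\<^sub>R z"
    using assms by (simp add: algebra_simps)
  ultimately show "x \<in> (\<lambda>y. (1 / real N) *\<^sub>R y + (1 / real N) *\<^sub>R z) ` unit_box" by blast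
next
  fix x :: 'a
  assume "x \<in> (\<lambda>y. (1 / real N) *\<^sub>R y + (1 / real N) *\<^sub>R z) ` unit_box"
  then obtain y where "y \<in> unit_box" "x = (1 / real N) *\<^sub>R y + (1 / real N) *\<^sub>R z" by blast
  moreover from this have "real N *\<^sub>R x - z = y" using assms by (simp add: algebra_simps)
  ultimately show "x \<in> grid_cell N z" using assms by (simp add: mem_grid_cell)
qed

lemma measure_grid_cell:
  "N > 0 \<Longrightarrow> measure lebesgue (grid_cell N z :: 'a::euclidean_space set) = (1 / real N) ^ DIM('a)"
  using emeasure_lebesgue_affine[of "1 / real N" "(1 / real N) *\<^sub>R z" "unit_box :: 'a set"]
  by (simp add: grid_cell_affine_image emeasure_unit_box measure_def)

lemma grid_cell_lmeasurable: "N > 0 \<Longrightarrow> grid_cell N z \<in> lmeasurable"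
  using emeasure_lebesgue_affine[of "1 / real N" "(1 / real N) *\<^sub>R z" unit_box]
  by (intro fmeasurableI[OF grid_cell_lebesgue]) (simp add: grid_cell_affine_image emeasure_unit_box)

lemma in_grid_cell_floor: "N > 0 \<Longrightarrow> x \<in> grid_cell N (lattice_floor (real N *\<^sub>R x))"
  by (simp add: mem_grid_cell minus_lattice_floor_in_unit_box)

lemma lattice_floor_in_grid_points:
  assumes "N > 0" "x \<in> unit_box"
  shows "lattice_floor (real N *\<^sub>R x) \<in> grid_points N"
proof -
  have "0 \<le> real_of_int \<lfloor>real N * (x \<bullet> b)\<rfloor> \<and> real_of_int \<lfloor>real N * (x \<bullet> b)\<rfloor> < real N"
    if "b \<in> Basis" for b
  proof -
    have "0 \<le> x \<bullet> b" "x \<bullet> b < 1" using assms(2) that by (auto simp: mem_unit_box)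
    then have "0 \<le> real N * (x \<bullet> b)" "real N * (x \<bullet> b) < real N" using assms(1) by auto
    moreover have "real_of_int \<lfloor>real N * (x \<bullet> b)\<rfloor> \<le> real N * (x \<bullet> b)" by (rule of_int_floor_le)
    ultimately show ?thesis by (intro conjI) (simp, linarith)
  qed
  then show ?thesis by (simp add: grid_points_def lattice_floor_in_lattice inner_lattice_floor)
qed

lemma grid_cell_subset_unit_box:
  assumes "N > 0" "z \<in> grid_points N"
  shows "grid_cell N z \<subseteq> unit_box"
proof
  fix x assume x: "x \<in> grid_cell N z"
  show "x \<in> unit_box" unfolding mem_unit_box
  proof
    fix b :: 'a assume b: "b \<in> Basis"
    have cell: "z \<bullet> b \<le> real N * (x \<bullet> b)" "real N * (x \<bullet> b) < z \<bullet> b + 1"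
      using x b assms(1) by (auto simp: mem_grid_cell mem_unit_box inner_diff_left)
    have "z \<bullet> b \<in> \<int>" "z \<bullet> b < real N" using assms(2) b by (auto simp: grid_points_def int_lattice_def)
    then obtain k where k: "z \<bullet> b = of_int k" "k < int N" by (auto elim!: Ints_cases)
    then have "z \<bullet> b + 1 \<le> real N" unfolding k(1) by linarith
    moreover have "0 \<le> z \<bullet> b" using assms(2) b by (auto simp: grid_points_def)
    ultimately have "0 \<le> real N * (x \<bullet> b)" "real N * (x \<bullet> b) < real N * 1" using cell by linarith+
    then show "0 \<le> x \<bullet> b \<and> x \<bullet> b < 1"
      using assms(1) by (simp add: zero_le_mult_iff)
  qed
qed

lemma unit_box_grid_decomposition:
  assumes "N > 0"
  shows "unit_box = (\<Union>z\<in>grid_points N. grid_cell N z)"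
  using grid_cell_subset_unit_box[OF assms] lattice_floor_in_grid_points[OF assms]
    in_grid_cell_floor[OF assms] by blast

lemma disjoint_grid_cells:
  assumes "N > 0"
  shows "disjoint_family_on (grid_cell N) (grid_points N)"
  unfolding disjoint_family_on_def
proof (intro ballI impI)
  fix z w :: 'a assume z: "z \<in> grid_points N" and w: "w \<in> grid_points N" and "z \<noteq> w"
  show "grid_cell N z \<inter> grid_cell N w = {}"
  proof (rule equals0I)
    fix x assume "x \<in> grid_cell N z \<inter> grid_cell N w"
    then have "z = lattice_floor (real N *\<^sub>R x)" "w = lattice_floor (real N *\<^sub>R x)"
      using z w assms by (auto intro!: lattice_floor_unique simp: grid_points_def mem_grid_cell)
    with \<open>z \<noteq> w\<close> show False by simp
  qed
qed

lemma measure_Int_grid_cells: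
  assumes G: "G \<in> sets lebesgue" and N: "N > 0" and Z: "Z \<subseteq> grid_points N"
  shows "measure lebesgue (G \<inter> (\<Union>z\<in>Z. grid_cell N z)) = (\<Sum>z\<in>Z. measure lebesgue (G \<inter> grid_cell N z))"
proof -
  have "measure lebesgue (\<Union>z\<in>Z. G \<inter> grid_cell N z) = (\<Sum>z\<in>Z. measure lebesgue (G \<inter> grid_cell N z))"
  proof (rule measure_finite_Union)
    show "finite Z" by (rule finite_subset[OF Z finite_grid_points])
    show "(\<lambda>z. G \<inter> grid_cell N z) ` Z \<subseteq> sets lebesgue" using G grid_cell_lebesgue by auto
    show "disjoint_family_on (\<lambda>z. G \<inter> grid_cell N z) Z"
      using disjoint_family_on_mono[OF Z disjoint_grid_cells[OF N]]
      by (auto simp: disjoint_family_on_def)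
    show "emeasure lebesgue (G \<inter> grid_cell N z) \<noteq> \<infinity>" for z
    proof -
      have "G \<inter> grid_cell N z \<in> lmeasurable"
        using G grid_cell_lmeasurable[OF N] by (rule Int_fmeasurable)
      then show ?thesis unfolding infinity_ennreal_def by (rule fmeasurableD2)
    qed
  qed
  then show ?thesis by (simp only: Int_UN_distrib)
qed

lemma dist_in_grid_cell_floor:
  fixes x y :: "'a::euclidean_space"
  assumes "N > 0" "y \<in> grid_cell N (lattice_floor (real N *\<^sub>R x))"
  shows "dist y x \<le> real DIM('a) / real N"
proof -
  have coord: "\<bar>(y - x) \<bullet> b\<bar> \<le> 1 / real N" if b: "b \<in> Basis" for b
  proof -
    have "\<lfloor>real N * (x \<bullet> b)\<rfloor> \<le> real N * (y \<bullet> b)" "real N * (y \<bullet> b) < \<lfloor>real N * (x \<bullet> b)\<rfloor> + 1"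
      using assms b by (auto simp: mem_grid_cell mem_unit_box inner_diff_left inner_lattice_floor)
    then have "\<bar>real N * (y \<bullet> b) - real N * (x \<bullet> b)\<bar> \<le> 1" by linarith
    then have "real N * \<bar>(y - x) \<bullet> b\<bar> \<le> 1"
      by (simp add: inner_diff_left right_diff_distrib[symmetric] abs_mult)
    then show ?thesis using assms(1) by (simp add: field_simps)
  qed
  have "dist y x \<le> (\<Sum>b\<in>Basis. \<bar>(y - x) \<bullet> b\<bar>)" by (simp add: dist_norm norm_le_l1)
  also have "\<dots> \<le> real DIM('a) * (1 / real N)"
    using sum_bounded_above[of Basis "\<lambda>b. \<bar>(y - x) \<bullet> b\<bar>", OF coord] by simp
  finally show ?thesis by simp
qed

lemma grid_cells_eventually_inside:
  fixes U :: "'a::euclidean_space set"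
  assumes "open U" "x \<in> U"
  obtains M where "\<And>N. N \<ge> M \<Longrightarrow> N > 0 \<Longrightarrow> grid_cell N (lattice_floor (real N *\<^sub>R x)) \<subseteq> U"
proof -
  obtain d where d: "d > 0" "ball x d \<subseteq> U" using assms open_contains_ball by blast
  obtain M :: nat where M: "real DIM('a) / d < real M" using reals_Archimedean2 by blast
  have "grid_cell N (lattice_floor (real N *\<^sub>R x)) \<subseteq> U" if N: "N \<ge> M" "N > 0" for N
  proof
    fix y assume y: "y \<in> grid_cell N (lattice_floor (real N *\<^sub>R x))"
    have "real DIM('a) < d * real N"
      using M d(1) N(1) by (simp add: field_simps) (smt (verit) mult_left_mono of_nat_le_iff)
    then have "real DIM('a) / real N < d" using N(2) by (simp add: field_simps)
    then have "dist y x < d" using dist_in_grid_cell_floor[OF N(2) y] by linarith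
    then show "y \<in> U" using d(2) by (auto simp: dist_commute)
  qed
  then show ?thesis using that by blast
qed

definition inner_grid :: "nat \<Rightarrow> 'a::euclidean_space set \<Rightarrow> 'a set" where
  "inner_grid N U = (\<Union>z\<in>{z\<in>grid_points N. grid_cell N z \<subseteq> U}. grid_cell N z)"

lemma inner_grid_lebesgue: "inner_grid N U \<in> sets lebesgue"
  unfolding inner_grid_def
  by (intro sets.countable_UN'' countable_finite grid_cell_lebesgue
      finite_subset[OF _ finite_grid_points[of N]]) auto

lemma inner_grid_subset: "N > 0 \<Longrightarrow> inner_grid N U \<subseteq> unit_box \<inter> U"
  unfolding inner_grid_def using grid_cell_subset_unit_box by blast

lemma inner_grid_exhausts:
  fixes U :: "'a::euclidean_space set"
  assumes U: "open U" and I: "infinite I" "0 \<notin> I" and e: "e > 0"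
  obtains N where "N \<in> I" "measure lebesgue (unit_box \<inter> U - inner_grid N U) < e"
proof -
  define V where "V = unit_box \<inter> (U :: 'a set)"
  define Y where "Y M = V - (\<Union>N\<in>{N\<in>I. M \<le> N}. V - inner_grid N U)" for M
  have V: "V \<in> lmeasurable"
    unfolding V_def using U
    by (intro fmeasurable_Int_fmeasurable[OF unit_box_lmeasurable] sets_lebesgue_if_borel borel_open)
  have Y: "Y M \<in> sets lebesgue" for M
    unfolding Y_def
    by (intro sets.Diff sets.countable_UN'' fmeasurableD[OF V] inner_grid_lebesgue countableI_type)
  have "V \<subseteq> (\<Union>M. Y M)"
  proof
    fix x assume x: "x \<in> V"
    obtain M where M: "\<And>N. N \<ge> M \<Longrightarrow> N > 0 \<Longrightarrow> grid_cell N (lattice_floor (real N *\<^sub>R x)) \<subseteq> U"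
      using grid_cells_eventually_inside[OF U] x by (auto simp: V_def)
    have "x \<in> inner_grid N U" if "N \<in> I" "M \<le> N" for N
    proof -
      have N: "N > 0" using that I(2) by (cases N) auto
      let ?z = "lattice_floor (real N *\<^sub>R x)"
      have "?z \<in> grid_points N" using lattice_floor_in_grid_points[OF N] x by (auto simp: V_def)
      moreover have "grid_cell N ?z \<subseteq> U" using M N that by simp
      ultimately show ?thesis using in_grid_cell_floor[OF N] unfolding inner_grid_def by blast
    qed
    then show "x \<in> (\<Union>M. Y M)" using x by (auto simp: Y_def)
  qed
  then have UY: "(\<Union>M. Y M) = V" by (auto simp: Y_def)
  have "(\<lambda>M. measure lebesgue (Y M)) \<longlonglongrightarrow> measure lebesgue (\<Union>M. Y M)"
  proof (rule Lim_measure_incseq)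
    show "range Y \<subseteq> sets lebesgue" using Y by auto
    show "incseq Y" by (auto simp: incseq_def Y_def)
    show "emeasure lebesgue (\<Union>M. Y M) \<noteq> \<infinity>" using fmeasurableD2[OF V] by (simp add: UY)
  qed
  then obtain M where "norm (measure lebesgue (Y M) - measure lebesgue V) < e"
    using LIMSEQ_D[OF _ e] UY by (metis order_refl)
  then have M: "measure lebesgue V - measure lebesgue (Y M) < e" by simp
  obtain N where N: "N \<in> I" "M \<le> N" using I(1) infinite_nat_iff_unbounded_le by blast
  have "V - inner_grid N U \<subseteq> V - Y M" using N by (auto simp: Y_def)
  then have "measure lebesgue (V - inner_grid N U) \<le> measure lebesgue (V - Y M)"
    by (rule measure_mono_fmeasurable[OF _ sets.Diff[OF fmeasurableD[OF V] inner_grid_lebesgue]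
          fmeasurable_Diff[OF V Y]])
  also have "\<dots> = measure lebesgue V - measure lebesgue (Y M)"
    using V Y by (intro measure_Diff) (auto simp: Y_def fmeasurable_def)
  finally show ?thesis using that N M by (simp add: V_def)
qed

lemma inner_grid_lmeasurable: "N > 0 \<Longrightarrow> inner_grid N U \<in> lmeasurable"
  using inner_grid_subset inner_grid_lebesgue by (blast intro: fmeasurableI2[OF unit_box_lmeasurable])

lemma measure_Int_inner_grid_le:
  assumes G: "G \<in> sets lebesgue" and N: "N > 0"
    and dens: "\<And>z. z \<in> grid_points N \<Longrightarrow> measure lebesgue (G \<inter> grid_cell N z) \<le> \<alpha> * measure lebesgue (grid_cell N z)"
  shows "measure lebesgue (G \<inter> inner_grid N U) \<le> \<alpha> * measure lebesgue (inner_grid N U)"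
proof -
  define Z where "Z = {z \<in> grid_points N. grid_cell N z \<subseteq> U}"
  have Z: "Z \<subseteq> grid_points N" by (auto simp: Z_def)
  have cells: "inner_grid N U = (\<Union>z\<in>Z. grid_cell N z)" by (simp add: inner_grid_def Z_def)
  have "measure lebesgue (G \<inter> inner_grid N U) = (\<Sum>z\<in>Z. measure lebesgue (G \<inter> grid_cell N z))"
    unfolding cells by (rule measure_Int_grid_cells[OF G N Z])
  also have "\<dots> \<le> (\<Sum>z\<in>Z. \<alpha> * measure lebesgue (grid_cell N z))"
    using dens Z by (intro sum_mono) auto
  also have "\<dots> = \<alpha> * measure lebesgue (inner_grid N U)"
    using measure_Int_grid_cells[OF sets.top N Z] by (simp add: cells sum_distrib_left)
  finally show ?thesis .
qed

lemma zero_or_one_if_le_square: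
  fixes \<alpha> :: real
  assumes "0 \<le> \<alpha>" "\<alpha> \<le> 1" "\<And>e. e > 0 \<Longrightarrow> \<alpha> \<le> \<alpha> * \<alpha> + e"
  shows "\<alpha> = 0 \<or> \<alpha> = 1"
proof -
  have "\<alpha> \<le> \<alpha> * \<alpha>" using assms(3) by (rule field_le_epsilon)
  moreover have "\<alpha> * \<alpha> \<le> \<alpha>" by (rule mult_left_le_one_le[OF assms(1) assms(1) assms(2)])
  ultimately have "\<alpha> * (\<alpha> - 1) = 0" by (simp add: algebra_simps)
  then show ?thesis by simp
qed

text \<open>Indeed, take an
  open \<open>U \<supseteq> G \<inter> unit_box\<close> with \<open>|U - G \<inter> unit_box| < \<epsilon>\<close> and a mesh whose inner cells \<open>W\<close> fill
  \<open>unit_box \<inter> U\<close> up to \<open>\<epsilon>\<close>; then \<open>\<alpha> \<le> |G \<inter> W| + \<epsilon> \<le> \<alpha> |W| + \<epsilon> \<le> \<alpha> (\<alpha> + \<epsilon>) + \<epsilon>\<close>.\<close>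
lemma density_zero_one:
  fixes G :: "'a::euclidean_space set"
  assumes G: "G \<in> sets lebesgue" and I: "infinite I" "0 \<notin> I"
    and dens: "\<And>N z. N \<in> I \<Longrightarrow> z \<in> grid_points N \<Longrightarrow>
      measure lebesgue (G \<inter> grid_cell N z) \<le> measure lebesgue (G \<inter> unit_box) * measure lebesgue (grid_cell N z)"
  shows "measure lebesgue (G \<inter> unit_box) = 0 \<or> measure lebesgue (G \<inter> unit_box) = 1"
proof (rule zero_or_one_if_le_square)
  define \<alpha> where "\<alpha> = measure lebesgue (G \<inter> unit_box)"
  have GQ: "G \<inter> unit_box \<in> lmeasurable" using G unit_box_lmeasurable by (rule Int_fmeasurable)
  show "0 \<le> \<alpha>" by (simp add: \<alpha>_def)
  show "\<alpha> \<le> 1"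
    using measure_mono_fmeasurable[OF Int_lower2 fmeasurableD[OF GQ] unit_box_lmeasurable]
    by (simp add: \<alpha>_def measure_unit_box)
  fix e :: real assume "e > 0"
  then have e2: "e / 2 > 0" by simp
  obtain U where U: "open U" "G \<inter> unit_box \<subseteq> U" "U - G \<inter> unit_box \<in> lmeasurable"
      "emeasure lebesgue (U - G \<inter> unit_box) < ennreal (e / 2)"
    using sets_lebesgue_outer_open[OF fmeasurableD[OF GQ] e2] by blast
  obtain N where N: "N \<in> I" "measure lebesgue (unit_box \<inter> U - inner_grid N U) < e / 2"
    using inner_grid_exhausts[OF U(1) I e2] by blast
  have N0: "N > 0" using N(1) I(2) by (cases N) auto
  define W where "W = inner_grid N U"
  have W: "W \<in> lmeasurable" unfolding W_def by (rule inner_grid_lmeasurable[OF N0])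
  have QU: "unit_box \<inter> U \<in> lmeasurable"
    using U(1) by (intro fmeasurable_Int_fmeasurable[OF unit_box_lmeasurable] sets_lebesgue_if_borel borel_open)
  have "measure lebesgue W \<le> measure lebesgue (G \<inter> unit_box \<union> (U - G \<inter> unit_box))"
    using inner_grid_subset[OF N0] by (intro measure_mono_fmeasurable fmeasurable.Un GQ U(3))
      (auto simp: W_def intro: inner_grid_lebesgue)
  also have "\<dots> \<le> \<alpha> + measure lebesgue (U - G \<inter> unit_box)"
    unfolding \<alpha>_def using GQ U(3) by (intro measure_Un_le) (auto intro: fmeasurableD)
  also have "measure lebesgue (U - G \<inter> unit_box) < e / 2"
    using U(3,4) by (simp add: emeasure_eq_measure2 ennreal_less_iff)
  finally have W_small: "measure lebesgue W \<le> \<alpha> + e / 2" by simp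
  have GW_m: "G \<inter> W \<in> lmeasurable" using G W by (rule Int_fmeasurable)
  have rest_m: "unit_box \<inter> U - W \<in> lmeasurable" by (rule fmeasurable_Diff[OF QU fmeasurableD[OF W]])
  have "\<alpha> \<le> measure lebesgue (G \<inter> W \<union> (unit_box \<inter> U - W))"
    unfolding \<alpha>_def using U(2)
    by (intro measure_mono_fmeasurable fmeasurable.Un GW_m rest_m fmeasurableD[OF GQ]) auto
  also have "\<dots> \<le> measure lebesgue (G \<inter> W) + measure lebesgue (unit_box \<inter> U - W)"
    by (intro measure_Un_le fmeasurableD GW_m rest_m)
  also have "measure lebesgue (G \<inter> W) \<le> \<alpha> * measure lebesgue W"
    unfolding W_def using dens[OF N(1)] by (intro measure_Int_inner_grid_le[OF G N0]) (simp add: \<alpha>_def)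
  also have "\<dots> \<le> \<alpha> * (\<alpha> + e / 2)" using W_small \<open>0 \<le> \<alpha>\<close> by (rule mult_left_mono)
  finally have "\<alpha> \<le> \<alpha> * (\<alpha> + e / 2) + e / 2" using N(2) by (simp add: W_def)
  moreover have "\<alpha> * (e / 2) \<le> e / 2" using \<open>\<alpha> \<le> 1\<close> e2 by (simp add: mult_left_le_one_le)
  ultimately show "\<alpha> \<le> \<alpha> * \<alpha> + e" by (simp add: algebra_simps)
qed

lemma periodic_null_or_conull:
  fixes P :: "'a::euclidean_space set"
  assumes P: "P \<in> sets lebesgue" "lattice_periodic P"
    and dens: "measure lebesgue (P \<inter> unit_box) = 0 \<or> measure lebesgue (P \<inter> unit_box) = 1"
  shows "negligible P \<or> negligible (- P)"
  using dens
proof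
  assume "measure lebesgue (P \<inter> unit_box) = 0"
  moreover have "P \<inter> unit_box \<in> lmeasurable"
    using P(1) unit_box_lmeasurable by (rule Int_fmeasurable)
  ultimately have "negligible (P \<inter> unit_box)" by (simp add: negligible_iff_measure0)
  then show ?thesis using periodic_negligible[OF P(2)] by blast
next
  assume dens1: "measure lebesgue (P \<inter> unit_box) = 1"
  have "unit_box - P = unit_box - unit_box \<inter> P" by blast
  also have "measure lebesgue \<dots> = measure lebesgue (unit_box :: 'a set) - measure lebesgue (unit_box \<inter> P)"
    by (intro measurable_measure_Diff unit_box_lmeasurable sets.Int unit_box_lebesgue P(1)) auto
  finally have "measure lebesgue (unit_box - P) = 0" using dens1 by (simp add: measure_unit_box Int_commute)
  then have "negligible (- P \<inter> unit_box)"
    using fmeasurable_Diff[OF unit_box_lmeasurable P(1)]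
    by (simp add: negligible_iff_measure0 Diff_eq Int_commute)
  moreover have "lattice_periodic (- P)" using P(2) by (simp add: lattice_periodic_def)
  ultimately show ?thesis using periodic_negligible by blast
qed

text \<open>If a periodic set is invariant under multiplication by \<open>N\<close>, then its density in each
  cell of mesh \<open>1/N\<close> is at most its density in the unit cube: the dilation \<open>x \<mapsto> N x\<close> maps
  the cell onto a translate of the cube.\<close>
lemma dilation_cell_density:
  fixes P :: "'a::euclidean_space set"
  assumes P: "P \<in> sets lebesgue" "lattice_periodic P" and N: "N > 0"
    and inv: "\<And>x. x \<in> P \<Longrightarrow> real N *\<^sub>R x \<in> P" and z: "z \<in> grid_points N"
  shows "measure lebesgue (P \<inter> grid_cell N z) \<le> measure lebesgue (P \<inter> unit_box) * measure lebesgue (grid_cell N z)"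
proof -
  define P' where "P' = (*\<^sub>R) (real N) -` P"
  have shift: "y + z \<in> P \<longleftrightarrow> y \<in> P" for y
    using P(2) z unfolding lattice_periodic_def grid_points_def by blast
  have P': "P' \<in> sets lebesgue"
    unfolding P'_def using measurable_sets[OF lebesgue_measurable_scaling P(1)] by simp
  have "P' \<inter> grid_cell N z = (\<lambda>y. (1 / real N) *\<^sub>R y + (1 / real N) *\<^sub>R z) ` (P \<inter> unit_box)"
    unfolding grid_cell_affine_image[OF N] using N shift
    by (auto simp: P'_def image_iff algebra_simps)
  then have "measure lebesgue (P' \<inter> grid_cell N z) = (1 / real N) ^ DIM('a) * measure lebesgue (P \<inter> unit_box)"
    using measure_lebesgue_affine[of "1 / real N" "(1 / real N) *\<^sub>R z" "P \<inter> unit_box"] by simp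
  moreover have "measure lebesgue (P \<inter> grid_cell N z) \<le> measure lebesgue (P' \<inter> grid_cell N z)"
    using inv by (intro measure_mono_fmeasurable sets.Int P(1) grid_cell_lebesgue
        Int_fmeasurable[OF P' grid_cell_lmeasurable[OF N]]) (auto simp: P'_def)
  ultimately show ?thesis using measure_grid_cell[OF N, of z] by (simp add: mult.commute)
qed

text \<open>Ergodicity of \<open>x \<mapsto> l x\<close> on the torus: a periodic set invariant under multiplication
  by an integer \<open>l \<ge> 2\<close> is null or conull (apply the density criterion along the meshes \<open>l\<^sup>t\<close>).\<close>
lemma dilation_invariant_null_or_conull:
  fixes P :: "'a::euclidean_space set"
  assumes P: "P \<in> sets lebesgue" "lattice_periodic P" and l: "l \<ge> 2"
    and inv: "\<And>x. x \<in> P \<Longrightarrow> real l *\<^sub>R x \<in> P"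
  shows "negligible P \<or> negligible (- P)"
proof (intro periodic_null_or_conull[OF P] density_zero_one[OF P(1)])
  have inv_power: "x \<in> P \<Longrightarrow> real (l ^ t) *\<^sub>R x \<in> P" for t x
  proof (induction t arbitrary: x)
    case (Suc t)
    then have "real l *\<^sub>R (real (l ^ t) *\<^sub>R x) \<in> P" by (intro inv)
    then show ?case by simp
  qed simp
  show "infinite (range (\<lambda>t. l ^ t))"
    using l by (intro range_inj_infinite injI) (simp add: power_inject_exp)
  show "0 \<notin> range (\<lambda>t. l ^ t)" using l by auto
  fix N and z :: 'a assume "N \<in> range (\<lambda>t. l ^ t)" "z \<in> grid_points N"
  then show "measure lebesgue (P \<inter> grid_cell N z) \<le> measure lebesgue (P \<inter> unit_box) * measure lebesgue (grid_cell N z)"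
    using l inv_power by (intro dilation_cell_density[OF P]) auto
qed

text \<open>The same for the affine maps \<open>x \<mapsto> l x + R\<close>, which are conjugate to \<open>x \<mapsto> l x\<close> by the
  translation by the fixed point \<open>-R/(l-1)\<close>.\<close>
lemma affine_dilation_invariant_null_or_conull:
  fixes P :: "'a::euclidean_space set"
  assumes P: "P \<in> sets lebesgue" "lattice_periodic P" and l: "l \<ge> 2"
    and inv: "\<And>x. x \<in> P \<Longrightarrow> real l *\<^sub>R x + R \<in> P"
  shows "negligible P \<or> negligible (- P)"
proof -
  define w where "w = (1 / (real l - 1)) *\<^sub>R R"
  have "real l *\<^sub>R w - w = (real l - 1) *\<^sub>R w" by (simp add: algebra_simps)
  also have "\<dots> = R" using l by (simp add: w_def)
  finally have R: "R = real l *\<^sub>R w - w" by simp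
  define P' where "P' = (+) w ` P"
  have mem_P': "y \<in> P' \<longleftrightarrow> y - w \<in> P" for y
    by (auto simp: P'_def image_iff) (metis add.commute diff_add_cancel)
  have "negligible P' \<or> negligible (- P')"
  proof (rule dilation_invariant_null_or_conull[OF _ _ l])
    show "P' \<in> sets lebesgue" unfolding P'_def by (rule lebesgue_sets_translation[OF P(1)])
    show "lattice_periodic P'"
      using P(2) by (simp add: lattice_periodic_def mem_P' diff_add_eq[symmetric])
    show "real l *\<^sub>R y \<in> P'" if "y \<in> P'" for y
    proof -
      have "real l *\<^sub>R (y - w) + R \<in> P" using that by (intro inv) (simp add: mem_P')
      moreover have "real l *\<^sub>R (y - w) + R = real l *\<^sub>R y - w" by (simp add: R algebra_simps)
      ultimately show ?thesis by (simp add: mem_P')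
    qed
  qed
  moreover have "- P' = (+) w ` (- P)" by (simp add: P'_def translation_Compl)
  ultimately show ?thesis unfolding P'_def using negligible_translation_rev by metis
qed

lemma grid_cell_translate:
  assumes "N > 0"
  shows "grid_cell N (z + w) = (+) ((1 / real N) *\<^sub>R w) ` grid_cell N z"
proof (rule set_eqI)
  fix x :: 'a
  have "x \<in> (+) ((1 / real N) *\<^sub>R w) ` grid_cell N z \<longleftrightarrow> x - (1 / real N) *\<^sub>R w \<in> grid_cell N z"
    by (auto simp: image_iff algebra_simps) (metis diff_add_cancel)
  then show "x \<in> grid_cell N (z + w) \<longleftrightarrow> x \<in> (+) ((1 / real N) *\<^sub>R w) ` grid_cell N z"
    using assms by (simp add: mem_grid_cell algebra_simps)
qed

lemma measure_Int_translate_le: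
  fixes P C :: "'a::euclidean_space set"
  assumes P: "P \<in> sets lebesgue" and C: "C \<in> lmeasurable" and null: "negligible (P - (+) v ` P)"
  shows "measure lebesgue (P \<inter> (+) v ` C) \<le> measure lebesgue (P \<inter> C)"
proof -
  have PC: "(+) v ` (P \<inter> C) \<in> lmeasurable"
    by (intro measurable_translation Int_fmeasurable P C)
  have N: "P - (+) v ` P \<in> lmeasurable" using null by (rule negligible_imp_measurable)
  have "measure lebesgue (P \<inter> (+) v ` C) \<le> measure lebesgue ((+) v ` (P \<inter> C) \<union> (P - (+) v ` P))"
    using P lebesgue_sets_translation[OF fmeasurableD[OF C], of v]
    by (intro measure_mono_fmeasurable fmeasurable.Un PC N) auto
  also have "\<dots> \<le> measure lebesgue ((+) v ` (P \<inter> C)) + measure lebesgue (P - (+) v ` P)"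
    by (intro measure_Un_le fmeasurableD PC N)
  also have "\<dots> = measure lebesgue (P \<inter> C)"
    using negligible_imp_measure0[OF null] by (simp add: measure_translation)
  finally show ?thesis .
qed

text \<open>If \<open>P\<close> is almost invariant under the translations by \<open>(1/N) \<int>\<^sup>n\<close>, then all cells of mesh
  \<open>1/N\<close> meet \<open>P\<close> in the same measure, so the density of \<open>P\<close> in each cell equals its density
  in the unit cube.\<close>
lemma translation_cell_density:
  fixes P :: "'a::euclidean_space set"
  assumes P: "P \<in> sets lebesgue" and N: "N > 0" and z: "z \<in> grid_points N"
    and inv: "\<And>w. w \<in> int_lattice \<Longrightarrow> negligible (P - (+) ((1 / real N) *\<^sub>R w) ` P)"
  shows "measure lebesgue (P \<inter> grid_cell N z) = measure lebesgue (P \<inter> unit_box) * measure lebesgue (grid_cell N z)"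
proof -
  have same: "measure lebesgue (P \<inter> grid_cell N w) = measure lebesgue (P \<inter> grid_cell N 0)"
    if "w \<in> int_lattice" for w :: 'a
  proof (rule antisym)
    show "measure lebesgue (P \<inter> grid_cell N w) \<le> measure lebesgue (P \<inter> grid_cell N 0)"
      using measure_Int_translate_le[OF P grid_cell_lmeasurable[OF N] inv[OF that]]
        grid_cell_translate[OF N, of 0 w] by simp
    show "measure lebesgue (P \<inter> grid_cell N 0) \<le> measure lebesgue (P \<inter> grid_cell N w)"
      using measure_Int_translate_le[OF P grid_cell_lmeasurable[OF N] inv[OF int_lattice_minus[OF that]]]
        grid_cell_translate[OF N, of w "- w"] by simp
  qed
  have lattice: "grid_points N \<subseteq> (int_lattice :: 'a set)" by (auto simp: grid_points_def)
  have decomp: "measure lebesgue (P \<inter> unit_box) = real (card (grid_points N :: 'a set)) * measure lebesgue (P \<inter> grid_cell N 0)"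
    using measure_Int_grid_cells[OF P N order_refl] same lattice
    by (simp add: unit_box_grid_decomposition[OF N, symmetric] subset_iff)
  have one: "real (card (grid_points N :: 'a set)) * measure lebesgue (grid_cell N 0 :: 'a set) = 1"
    using measure_Int_grid_cells[OF sets.top N order_refl]
    by (simp add: unit_box_grid_decomposition[OF N, symmetric] measure_unit_box measure_grid_cell[OF N])
  have "measure lebesgue (P \<inter> unit_box) * measure lebesgue (grid_cell N z)
      = measure lebesgue (P \<inter> grid_cell N 0) * (real (card (grid_points N :: 'a set)) * measure lebesgue (grid_cell N 0 :: 'a set))"
    using decomp by (simp add: measure_grid_cell[OF N])
  also have "\<dots> = measure lebesgue (P \<inter> grid_cell N z)" using one same z lattice by auto
  finally show ?thesis ..
qed

lemma translation_invariant_null_or_conull: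
  fixes P :: "'a::euclidean_space set"
  assumes P: "P \<in> sets lebesgue" "lattice_periodic P" and I: "infinite I" "0 \<notin> I"
    and inv: "\<And>N w. N \<in> I \<Longrightarrow> w \<in> int_lattice \<Longrightarrow> negligible (P - (+) ((1 / real N) *\<^sub>R w) ` P)"
  shows "negligible P \<or> negligible (- P)"
proof (intro periodic_null_or_conull[OF P] density_zero_one[OF P(1) I])
  fix N and z :: 'a assume "N \<in> I" "z \<in> grid_points N"
  moreover from this have "N > 0" using I(2) by (cases N) auto
  ultimately show "measure lebesgue (P \<inter> grid_cell N z) \<le> measure lebesgue (P \<inter> unit_box) * measure lebesgue (grid_cell N z)"
    using translation_cell_density[OF P(1)] inv by simp
qed

lemma ball_Basis_matrix:
  "(\<forall>b\<in>(Basis :: (real^'m^'n) set). P b) \<longleftrightarrow> (\<forall>i j. P (axis i (axis j 1)))"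
  by (auto simp: Basis_vec_def)

lemma int_lattice_matrix: "(Z :: real^'m^'n) \<in> int_lattice \<longleftrightarrow> (\<forall>i j. Z $ i $ j \<in> \<int>)"
  by (simp add: int_lattice_def ball_Basis_matrix inner_axis)

lemma unit_cube_mat_cbox: "unit_cube_mat = cbox (0 :: real^'m^'n) One"
  by (auto simp: unit_cube_mat_def mem_box ball_Basis_matrix inner_axis)

lemma Gcd_eq_1_iff_no_common_prime:
  "Gcd (A :: int set) = 1 \<longleftrightarrow> \<not> (\<exists>r. prime r \<and> (\<forall>a\<in>A. r dvd a))"
proof -
  have "Gcd A = 1 \<longleftrightarrow> is_unit (Gcd A)"
    by (metis is_unit_normalize normalize_Gcd one_dvd)
  also have "\<dots> \<longleftrightarrow> \<not> (\<exists>r. prime r \<and> r dvd Gcd A)"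
    by (metis Gcd_0_iff dvd_0_right not_prime_unit prime_divisor_exists prime_int_numeral_eq
        two_is_prime_nat dvd_unit_imp_unit)
  finally show ?thesis by (simp add: dvd_Gcd_iff)
qed

lemma cond_ok_transfer:
  assumes "cond_ok c p q"
    and "\<And>r j. prime r \<Longrightarrow> (\<forall>i. r dvd q $ i) \<Longrightarrow> r dvd p' $ j \<Longrightarrow> r dvd p $ j"
  shows "cond_ok c p' q"
  using assms by (cases c) (simp_all only: cond_ok.simps Gcd_eq_1_iff_no_common_prime, blast+)

definition solutions :: "coprimality \<Rightarrow> ('m \<Rightarrow> int^'n \<Rightarrow> real) \<Rightarrow> (int^'n \<Rightarrow> bool) \<Rightarrow> real \<Rightarrow>
    real^'m^'n \<Rightarrow> ((int^'m) \<times> (int^'n)) set" where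
  "solutions c \<Psi> C k X = {(p, q). q \<noteq> 0 \<and> C q \<and> cond_ok c p q \<and>
      (\<forall>j. \<bar>linform q X j + real_of_int (p $ j)\<bar> < k * \<Psi> j q)}"

definition F_ext :: "coprimality \<Rightarrow> ('m \<Rightarrow> int^'n \<Rightarrow> real) \<Rightarrow> (int^'n \<Rightarrow> bool) \<Rightarrow> (real^'m^'n) set" where
  "F_ext c \<Psi> C = {X. \<exists>k::nat. k \<ge> 1 \<and> infinite (solutions c \<Psi> C (real k) X)}"

lemma F_set_eq_F_ext: "F_set c \<Psi> = F_ext c \<Psi> (\<lambda>_. True) \<inter> unit_cube_mat"
  by (auto simp: F_set_def approx_set_def F_ext_def solutions_def)

lemma F_ext_mono:
  assumes "\<And>q. C q \<Longrightarrow> D q"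
  shows "F_ext c \<Psi> C \<subseteq> F_ext c \<Psi> D"
proof -
  have "solutions c \<Psi> C k X \<subseteq> solutions c \<Psi> D k X" for k X
    using assms by (auto simp: solutions_def)
  then show ?thesis unfolding F_ext_def by (blast dest: finite_subset)
qed

lemma F_ext_finite_cover:
  assumes "finite K" "\<And>q. C q \<Longrightarrow> \<exists>\<kappa>\<in>K. D \<kappa> q"
  shows "F_ext c \<Psi> C \<subseteq> (\<Union>\<kappa>\<in>K. F_ext c \<Psi> (D \<kappa>))"
proof
  fix X assume "X \<in> F_ext c \<Psi> C"
  then obtain k :: nat where k: "k \<ge> 1" "infinite (solutions c \<Psi> C (real k) X)"
    by (auto simp: F_ext_def)
  have "solutions c \<Psi> C (real k) X \<subseteq> (\<Union>\<kappa>\<in>K. solutions c \<Psi> (D \<kappa>) (real k) X)"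
    using assms(2) by (auto simp: solutions_def)
  then obtain \<kappa> where "\<kappa> \<in> K" "infinite (solutions c \<Psi> (D \<kappa>) (real k) X)"
    using k(2) assms(1) by (meson finite_UN finite_subset)
  then show "X \<in> (\<Union>\<kappa>\<in>K. F_ext c \<Psi> (D \<kappa>))" using k(1) by (auto simp: F_ext_def)
qed

lemma F_ext_transfer:
  assumes X: "X \<in> F_ext c \<Psi> C" and l: "l \<ge> 1"
    and sol: "\<And>k p q. (p, q) \<in> solutions c \<Psi> C (real k) X \<Longrightarrow> (g q p, q) \<in> solutions c \<Psi> C (real (l * k)) X'"
    and inj: "\<And>q. inj (g q)"
  shows "X' \<in> F_ext c \<Psi> C"
proof -
  obtain k :: nat where k: "k \<ge> 1" "infinite (solutions c \<Psi> C (real k) X)"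
    using X by (auto simp: F_ext_def)
  define h where "h = (\<lambda>(p, q). (g q p, q))"
  have "inj h" using inj by (auto simp: h_def inj_def)
  then have "infinite (h ` solutions c \<Psi> C (real k) X)"
    using k(2) by (simp add: finite_image_iff inj_on_subset)
  moreover have "h ` solutions c \<Psi> C (real k) X \<subseteq> solutions c \<Psi> C (real (l * k)) X'"
    using sol by (auto simp: h_def)
  ultimately have "infinite (solutions c \<Psi> C (real (l * k)) X')" using finite_subset by blast
  moreover have "l * k \<ge> 1" using k(1) l by simp
  ultimately show ?thesis unfolding F_ext_def by blast
qed

definition floor_matrix :: "real^'m^'n \<Rightarrow> int^'m^'n" where
  "floor_matrix Z = (\<chi> i j. \<lfloor>Z $ i $ j\<rfloor>)"

definition int_linform :: "int^'n \<Rightarrow> int^'m^'n \<Rightarrow> int^'m" where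
  "int_linform q E = (\<chi> j. \<Sum>i\<in>UNIV. q $ i * E $ i $ j)"

lemma linform_add: "linform q (X + Y) j = linform q X j + linform q Y j"
  by (simp add: linform_def algebra_simps sum.distrib)

lemma linform_scale: "linform q (r *\<^sub>R X) j = r * linform q X j"
  by (simp add: linform_def sum_distrib_left algebra_simps)

lemma linform_int_lattice:
  assumes "Z \<in> int_lattice"
  shows "linform q Z j = real_of_int (int_linform q (floor_matrix Z) $ j)"
proof -
  have "Z $ i $ j = of_int \<lfloor>Z $ i $ j\<rfloor>" for i
    using assms by (auto simp: int_lattice_matrix elim!: Ints_cases)
  then show ?thesis by (simp add: linform_def int_linform_def floor_matrix_def)
qed

lemma dvd_int_linform: "(\<And>i. r dvd q $ i) \<Longrightarrow> r dvd int_linform q E $ j"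
  by (simp add: int_linform_def dvd_sum)

text \<open>Shifting \<open>X\<close> by an integer matrix shifts the solutions \<open>p\<close> by an integer vector; hence
  \<open>F_ext\<close> is invariant under the integer lattice.\<close>
lemma F_ext_periodic: "lattice_periodic (F_ext c \<Psi> C)"
proof -
  have shift: "X + Z \<in> F_ext c \<Psi> C" if X: "X \<in> F_ext c \<Psi> C" and Z: "Z \<in> int_lattice" for X Z
  proof (rule F_ext_transfer[OF X order_refl, where g = "\<lambda>q p. p - int_linform q (floor_matrix Z)"])
    show "inj (\<lambda>p. p - int_linform q (floor_matrix Z))" for q by (simp add: inj_def)
    fix k p q assume pq: "(p, q) \<in> solutions c \<Psi> C (real k) X"
    have shift_eq: "linform q (X + Z) j + real_of_int ((p - int_linform q (floor_matrix Z)) $ j)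
        = linform q X j + real_of_int (p $ j)" for j
      using Z by (simp add: linform_add linform_int_lattice)
    have "cond_ok c (p - int_linform q (floor_matrix Z)) q"
    proof (rule cond_ok_transfer)
      show "cond_ok c p q" using pq by (simp add: solutions_def)
      fix r j assume "\<forall>i. r dvd q $ i" "r dvd (p - int_linform q (floor_matrix Z)) $ j"
      then show "r dvd p $ j" by (metis dvd_int_linform dvd_add diff_add_cancel vector_minus_component)
    qed
    moreover have "\<forall>j. \<bar>linform q (X + Z) j + real_of_int ((p - int_linform q (floor_matrix Z)) $ j)\<bar> < real k * \<Psi> j q"
      unfolding shift_eq using pq by (simp add: solutions_def)
    ultimately show "(p - int_linform q (floor_matrix Z), q) \<in> solutions c \<Psi> C (real (1 * k)) (X + Z)"
      using pq by (simp add: solutions_def)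
  qed
  show ?thesis unfolding lattice_periodic_def
  proof (intro allI impI iffI)
    fix x z assume z: "z \<in> int_lattice" and "x + z \<in> F_ext c \<Psi> C"
    then have "x + z + - z \<in> F_ext c \<Psi> C" using shift int_lattice_minus by blast
    then show "x \<in> F_ext c \<Psi> C" by simp
  qed (rule shift)
qed

lemma infinite_iff_unbounded_to_nat:
  fixes A :: "'a::countable set"
  shows "infinite A \<longleftrightarrow> (\<forall>n. \<exists>s\<in>A. n \<le> to_nat s)"
proof -
  have "infinite A \<longleftrightarrow> infinite (to_nat ` A)"
    using finite_image_iff[OF inj_on_subset[OF inj_to_nat subset_UNIV]] by blast
  also have "\<dots> \<longleftrightarrow> (\<forall>n. \<exists>s\<in>A. n \<le> to_nat s)"
    unfolding infinite_nat_iff_unbounded_le by blast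
  finally show ?thesis .
qed

lemma lebesgue_infinitely_often:
  fixes B :: "'b::countable \<Rightarrow> 'a::euclidean_space set"
  assumes "\<And>s. B s \<in> sets lebesgue"
  shows "{x. infinite {s \<in> S. x \<in> B s}} \<in> sets lebesgue"
proof -
  have "{x. infinite {s \<in> S. x \<in> B s}} = (\<Inter>n. \<Union>s\<in>{s\<in>S. n \<le> to_nat s}. B s)"
    by (auto simp: infinite_iff_unbounded_to_nat)
  also have "\<dots> \<in> sets lebesgue"
    using assms by (intro sets.countable_INT sets.countable_UN'' countableI_type) auto
  finally show ?thesis .
qed

text \<open>\<open>F_ext\<close> is measurable: for fixed \<open>k\<close> and \<open>(p, q)\<close> the solution region in \<open>X\<close> is open.\<close>
lemma F_ext_lebesgue:
  fixes \<Psi> :: "'m::finite \<Rightarrow> int^'n::finite \<Rightarrow> real"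
  shows "F_ext c \<Psi> C \<in> sets lebesgue"
proof -
  define S where "S = {(p :: int^'m, q :: int^'n). q \<noteq> 0 \<and> C q \<and> cond_ok c p q}"
  define B where "B k = (\<lambda>(p, q). {X :: real^'m^'n. \<forall>j. \<bar>linform q X j + real_of_int (p $ j)\<bar> < k * \<Psi> j q})"
    for k
  have "open (B k s)" for k s
  proof -
    have "B k s = (\<Inter>j. {X. \<bar>linform (snd s) X j + real_of_int (fst s $ j)\<bar> < k * \<Psi> j (snd s)})"
      by (auto simp: B_def case_prod_beta)
    also have "open \<dots>"
      unfolding linform_def by (intro open_INT finite_UNIV ballI open_Collect_less continuous_intros) auto
    finally show ?thesis .
  qed
  then have level_k: "{X. infinite {s \<in> S. X \<in> B (real k) s}} \<in> sets lebesgue" for k :: nat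
    by (intro lebesgue_infinitely_often sets_lebesgue_if_borel borel_open)
  have "solutions c \<Psi> C k X = {s \<in> S. X \<in> B k s}" for k X
    by (auto simp: solutions_def S_def B_def)
  then have "F_ext c \<Psi> C = (\<Union>k\<in>{1..}. {X. infinite {s \<in> S. X \<in> B (real k) s}})"
    unfolding F_ext_def by auto
  also have "\<dots> \<in> sets lebesgue" by (rule sets.countable_UN''[OF countableI_type level_k])
  finally show ?thesis .
qed

datatype 'i div_class = Indivisible | Exact 'i | Square

fun in_div_class :: "nat \<Rightarrow> 'n div_class \<Rightarrow> int^'n \<Rightarrow> bool" where
  "in_div_class l Indivisible q \<longleftrightarrow> \<not> (\<forall>i. int l dvd q $ i)"
| "in_div_class l (Exact i) q \<longleftrightarrow> (\<forall>i'. int l dvd q $ i') \<and> \<not> (int l)\<^sup>2 dvd q $ i"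
| "in_div_class l Square q \<longleftrightarrow> (\<forall>i. (int l)\<^sup>2 dvd q $ i)"

lemma in_some_div_class: "\<exists>\<kappa>\<in>insert Indivisible (insert Square (range Exact)). in_div_class l \<kappa> q"
  by (cases "\<forall>i. int l dvd q $ i"; cases "\<forall>i. (int l)\<^sup>2 dvd q $ i") auto

lemma prime_dvd_mult_other:
  fixes r :: int
  assumes "prime r" "prime (int l)" "r \<noteq> int l" "r dvd int l * a"
  shows "r dvd a"
  using assms primes_dvd_imp_eq prime_dvd_mult_iff by blast

lemma scaled_solution_bound:
  assumes "\<bar>L + real_of_int a\<bar> < real k * \<psi>" "l > 0"
  shows "\<bar>real l * L + real_of_int (int l * a)\<bar> < real (l * k) * \<psi>"
proof -
  have "\<bar>real l * L + real_of_int (int l * a)\<bar> = real l * \<bar>L + real_of_int a\<bar>"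
    by (simp add: abs_mult flip: distrib_left)
  also have "\<dots> < real l * (real k * \<psi>)" using assms by simp
  finally show ?thesis by (simp add: mult.assoc)
qed

text \<open>Denominators not divisible by \<open>l\<close>: the dilation \<open>X \<mapsto> l X\<close> sends a solution \<open>(p, q)\<close> to
  the solution \<open>(l p, q)\<close>, and coprimality survives because the only new prime factor \<open>l\<close> does
  not divide \<open>q\<close>.\<close>
lemma F_ext_Indivisible_dilation:
  fixes \<Psi> :: "'m::finite \<Rightarrow> int^'n::finite \<Rightarrow> real"
  assumes l: "prime l" and X: "X \<in> F_ext c \<Psi> (in_div_class l Indivisible)"
  shows "real l *\<^sub>R X \<in> F_ext c \<Psi> (in_div_class l Indivisible)"
proof (rule F_ext_transfer[OF X, where g = "\<lambda>q p. \<chi> j. int l * p $ j"])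
  have l0: "l > 0" using l by (simp add: prime_gt_0_nat)
  show "l \<ge> 1" using l0 by simp
  show "inj (\<lambda>p. \<chi> j. int l * p $ j :: int^'m)" for q
    using l0 by (simp add: inj_def vec_eq_iff)
  fix k p q assume pq: "(p, q) \<in> solutions c \<Psi> (in_div_class l Indivisible) (real k) X"
  have "cond_ok c (\<chi> j. int l * p $ j) q"
  proof (rule cond_ok_transfer)
    show "cond_ok c p q" using pq by (simp add: solutions_def)
    fix r j assume r: "prime r" "\<forall>i. r dvd q $ i" "r dvd (\<chi> j. int l * p $ j) $ j"
    have "r \<noteq> int l" using r(2) pq by (auto simp: solutions_def)
    moreover have "prime (int l)" "r dvd int l * p $ j" using l r(3) by simp_all
    ultimately show "r dvd p $ j" using prime_dvd_mult_other[OF r(1)] by blast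
  qed
  moreover have "\<bar>linform q (real l *\<^sub>R X) j + real_of_int ((\<chi> j. int l * p $ j) $ j)\<bar> < real (l * k) * \<Psi> j q"
    for j
  proof -
    have "\<bar>linform q X j + real_of_int (p $ j)\<bar> < real k * \<Psi> j q" using pq by (simp add: solutions_def)
    from scaled_solution_bound[OF this l0] show ?thesis by (simp add: linform_scale)
  qed
  ultimately show "(\<chi> j. int l * p $ j, q) \<in> solutions c \<Psi> (in_div_class l Indivisible) (real (l * k)) (real l *\<^sub>R X)"
    using pq by (simp add: solutions_def)
qed

definition row_shift :: "nat \<Rightarrow> 'n \<Rightarrow> real^'m^'n" where
  "row_shift l i = (\<chi> i' j. if i' = i then 1 / real l else 0)"

lemma linform_row_shift: "linform q (row_shift l i) j = real_of_int (q $ i) / real l"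
  by (simp add: linform_def row_shift_def if_distrib cong: if_cong)

text \<open>Denominators with \<open>l | q\<close> but \<open>l\<^sup>2 \<not>| q\<^sub>i\<close>: the affine map \<open>X \<mapsto> l X + row_shift l i\<close> sends a
  solution \<open>(p, q)\<close> to the solution \<open>(l p - q\<^sub>i/l, q)\<close>; a prime dividing \<open>q\<close> and \<open>l p\<^sub>j - q\<^sub>i/l\<close>
  cannot be \<open>l\<close> (else \<open>l\<^sup>2 | q\<^sub>i\<close>), so it divides \<open>p\<^sub>j\<close>.\<close>
lemma F_ext_Exact_affine:
  fixes \<Psi> :: "'m::finite \<Rightarrow> int^'n::finite \<Rightarrow> real"
  assumes l: "prime l" and X: "X \<in> F_ext c \<Psi> (in_div_class l (Exact i))"
  shows "real l *\<^sub>R X + row_shift l i \<in> F_ext c \<Psi> (in_div_class l (Exact i))"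
proof (rule F_ext_transfer[OF X, where g = "\<lambda>q p. \<chi> j. int l * p $ j - q $ i div int l"])
  have l0: "l > 0" using l by (simp add: prime_gt_0_nat)
  have pl: "prime (int l)" using l by simp
  show "l \<ge> 1" using l0 by simp
  show "inj (\<lambda>p. \<chi> j. int l * p $ j - q $ i div int l :: int^'m)" for q
    using l0 by (simp add: inj_def vec_eq_iff)
  fix k p q assume pq: "(p, q) \<in> solutions c \<Psi> (in_div_class l (Exact i)) (real k) X"
  define t where "t = q $ i div int l"
  have cls: "\<forall>i. int l dvd q $ i" "\<not> (int l)\<^sup>2 dvd q $ i" using pq by (auto simp: solutions_def)
  have qt: "q $ i = int l * t" using cls(1) by (simp add: t_def)
  have "cond_ok c (\<chi> j. int l * p $ j - t) q"
  proof (rule cond_ok_transfer)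
    show "cond_ok c p q" using pq by (simp add: solutions_def)
    fix r j assume r: "prime r" "\<forall>i. r dvd q $ i" "r dvd (\<chi> j. int l * p $ j - t) $ j"
    then have r_diff: "r dvd int l * p $ j - t" by simp
    show "r dvd p $ j"
    proof (cases "r = int l")
      case True
      have "r dvd int l * p $ j" using True by simp
      then have "r dvd int l * p $ j - (int l * p $ j - t)" using r_diff by (rule dvd_diff)
      then have "int l dvd t" using True by simp
      then have "(int l)\<^sup>2 dvd q $ i" unfolding qt power2_eq_square by (rule mult_dvd_mono[OF dvd_refl])
      with cls(2) show ?thesis ..
    next
      case False
      have "r dvd int l * t" using r(2) unfolding qt[symmetric] by blast
      then have "r dvd t" using prime_dvd_mult_other[OF r(1) pl False] by blast
      then have "r dvd (int l * p $ j - t) + t" using r_diff by (intro dvd_add)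
      then have "r dvd int l * p $ j" by simp
      then show ?thesis using prime_dvd_mult_other[OF r(1) pl False] by blast
    qed
  qed
  moreover have "\<bar>linform q (real l *\<^sub>R X + row_shift l i) j + real_of_int ((\<chi> j. int l * p $ j - t) $ j)\<bar>
      < real (l * k) * \<Psi> j q" for j
  proof -
    have bound: "\<bar>linform q X j + real_of_int (p $ j)\<bar> < real k * \<Psi> j q" using pq by (simp add: solutions_def)
    have "linform q (real l *\<^sub>R X + row_shift l i) j + real_of_int ((\<chi> j. int l * p $ j - t) $ j)
        = real l * linform q X j + real_of_int (int l * p $ j)"
      using l0 by (simp add: linform_add linform_scale linform_row_shift qt)
    then show ?thesis using scaled_solution_bound[OF bound l0] by simp
  qed
  ultimately show "(\<chi> j. int l * p $ j - q $ i div int l, q)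
      \<in> solutions c \<Psi> (in_div_class l (Exact i)) (real (l * k)) (real l *\<^sub>R X + row_shift l i)"
    using pq unfolding t_def by (simp add: solutions_def)
qed

text \<open>Denominators with \<open>l\<^sup>2 | q\<close>: for an integer matrix \<open>Z\<close>, the translation \<open>X \<mapsto> X + Z/l\<close> changes
  the linear forms by the integers \<open>(q/l) Z\<^sup>(\<^sup>j\<^sup>)\<close>, which are divisible by every prime dividing \<open>q\<close>
  (for \<open>l\<close> itself because \<open>l | q/l\<close>).\<close>
lemma F_ext_Square_translation:
  fixes \<Psi> :: "'m::finite \<Rightarrow> int^'n::finite \<Rightarrow> real"
  assumes l: "prime l" and X: "X \<in> F_ext c \<Psi> (in_div_class l Square)" and Z: "Z \<in> int_lattice"
  shows "X + (1 / real l) *\<^sub>R Z \<in> F_ext c \<Psi> (in_div_class l Square)"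
proof (rule F_ext_transfer[OF X order_refl,
      where g = "\<lambda>q p. p - int_linform (\<chi> i. q $ i div int l) (floor_matrix Z)"])
  have l0: "l > 0" using l by (simp add: prime_gt_0_nat)
  have pl: "prime (int l)" using l by simp
  show "inj (\<lambda>p. p - int_linform (\<chi> i. q $ i div int l) (floor_matrix Z))" for q
    by (simp add: inj_def)
  fix k p q assume pq: "(p, q) \<in> solutions c \<Psi> (in_div_class l Square) (real k) X"
  define q' :: "int^'n" where "q' = (\<chi> i. q $ i div int l)"
  define v where "v = int_linform q' (floor_matrix Z)"
  have sq: "(int l)\<^sup>2 dvd q $ i" for i using pq by (simp add: solutions_def)
  have q_eq: "q $ i = int l * q' $ i" for i
    using dvd_trans[OF _ sq[of i], of "int l"] by (simp add: q'_def power2_eq_square)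
  have "cond_ok c (p - v) q"
  proof (rule cond_ok_transfer)
    show "cond_ok c p q" using pq by (simp add: solutions_def)
    fix r j assume r: "prime r" "\<forall>i. r dvd q $ i" "r dvd (p - v) $ j"
    have "r dvd q' $ i" for i
    proof (cases "r = int l")
      case True
      have "int l * int l dvd int l * q' $ i" using sq[of i] by (simp add: q_eq power2_eq_square)
      then show ?thesis using True l0 by simp
    next
      case False
      have "r dvd int l * q' $ i" using r(2) by (simp add: q_eq[symmetric])
      then show ?thesis using prime_dvd_mult_other[OF r(1) pl False] by blast
    qed
    then have "r dvd v $ j" unfolding v_def by (rule dvd_int_linform)
    then have "r dvd (p - v) $ j + v $ j" using r(3) by (intro dvd_add)
    then show "r dvd p $ j" by simp
  qed
  moreover have "\<bar>linform q (X + (1 / real l) *\<^sub>R Z) j + real_of_int ((p - v) $ j)\<bar> < real k * \<Psi> j q" for j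
  proof -
    have "int_linform q (floor_matrix Z) $ j = int l * v $ j"
      by (simp add: v_def int_linform_def q_eq sum_distrib_left mult.assoc)
    then have "linform q ((1 / real l) *\<^sub>R Z) j = real_of_int (v $ j)"
      using l0 by (simp add: linform_scale linform_int_lattice[OF Z])
    then show ?thesis using pq by (simp add: solutions_def linform_add)
  qed
  ultimately show "(p - int_linform (\<chi> i. q $ i div int l) (floor_matrix Z), q)
      \<in> solutions c \<Psi> (in_div_class l Square) (real (1 * k)) (X + (1 / real l) *\<^sub>R Z)"
    using pq unfolding v_def q'_def by (simp add: solutions_def)
qed

text \<open>The classes other than \<open>Square\<close> carry ergodic maps, so their parts of \<open>F_ext\<close> are null
  or conull.\<close>
lemma F_ext_non_square_null_or_conull:
  fixes \<Psi> :: "'m::finite \<Rightarrow> int^'n::finite \<Rightarrow> real"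
  assumes l: "prime l" and \<kappa>: "\<kappa> \<noteq> Square"
  shows "negligible (F_ext c \<Psi> (in_div_class l \<kappa>)) \<or> negligible (- F_ext c \<Psi> (in_div_class l \<kappa>))"
proof -
  have l2: "l \<ge> 2" using l by (rule prime_ge_2_nat)
  show ?thesis
  proof (cases \<kappa>)
    case Indivisible
    then show ?thesis
      using l F_ext_Indivisible_dilation
      by (intro dilation_invariant_null_or_conull[OF F_ext_lebesgue F_ext_periodic l2]) blast
  next
    case (Exact i)
    then show ?thesis
      using l F_ext_Exact_affine
      by (intro affine_dilation_invariant_null_or_conull[OF F_ext_lebesgue F_ext_periodic l2]) blast
  qed (use \<kappa> in simp)
qed

text \<open>If all non-\<open>Square\<close> parts for \<open>l\<close> are null, then up to a null set \<open>F_ext\<close> coincides with its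
  \<open>Square\<close> part, which is invariant under the translations by \<open>(1/l) \<int>\<^sup>n\<^sup>m\<close>.\<close>
lemma F_ext_almost_translation_invariant:
  fixes \<Psi> :: "'m::finite \<Rightarrow> int^'n::finite \<Rightarrow> real" and c :: coprimality
  defines "P \<equiv> F_ext c \<Psi> (\<lambda>_. True)"
  assumes l: "prime l" and null: "\<And>\<kappa>. \<kappa> \<noteq> Square \<Longrightarrow> negligible (F_ext c \<Psi> (in_div_class l \<kappa>))"
    and Z: "Z \<in> int_lattice"
  shows "negligible (P - (+) ((1 / real l) *\<^sub>R Z) ` P)"
proof -
  define K :: "'n div_class set" where "K = insert Indivisible (range Exact)"
  have "P \<subseteq> (\<Union>\<kappa>\<in>insert Square K. F_ext c \<Psi> (in_div_class l \<kappa>))"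
    unfolding P_def K_def using in_some_div_class by (intro F_ext_finite_cover) auto
  moreover have "x \<in> (+) ((1 / real l) *\<^sub>R Z) ` P" if "x \<in> F_ext c \<Psi> (in_div_class l Square)" for x
  proof -
    have "x + (1 / real l) *\<^sub>R (- Z) \<in> F_ext c \<Psi> (in_div_class l Square)"
      using F_ext_Square_translation[OF l that int_lattice_minus[OF Z]] .
    then have "x - (1 / real l) *\<^sub>R Z \<in> P" using F_ext_mono[of _ "\<lambda>_. True"] unfolding P_def by auto
    then show ?thesis by (rule rev_image_eqI) simp
  qed
  ultimately have "P - (+) ((1 / real l) *\<^sub>R Z) ` P \<subseteq> (\<Union>\<kappa>\<in>K. F_ext c \<Psi> (in_div_class l \<kappa>))"
    by blast
  moreover have "negligible (\<Union>\<kappa>\<in>K. F_ext c \<Psi> (in_div_class l \<kappa>))"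
    using null by (intro negligible_Union) (auto simp: K_def)
  ultimately show ?thesis using negligible_subset by blast
qed

text \<open>The zero-one law for \<open>F_ext\<close>: either some prime gives a non-null ergodic part, which is
  then conull, or for every prime \<open>F_ext\<close> is almost invariant under \<open>(1/l) \<int>\<^sup>n\<^sup>m\<close>.\<close>
lemma F_ext_null_or_conull:
  fixes \<Psi> :: "'m::finite \<Rightarrow> int^'n::finite \<Rightarrow> real"
  shows "negligible (F_ext c \<Psi> (\<lambda>_. True)) \<or> negligible (- F_ext c \<Psi> (\<lambda>_. True))"
proof (cases "\<exists>l \<kappa>. prime l \<and> \<kappa> \<noteq> Square \<and> \<not> negligible (F_ext c \<Psi> (in_div_class l \<kappa>))")
  case True
  then obtain l \<kappa> where "prime l" "\<kappa> \<noteq> Square" "\<not> negligible (F_ext c \<Psi> (in_div_class l \<kappa>))"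
    by blast
  then have "negligible (- F_ext c \<Psi> (in_div_class l \<kappa>))"
    using F_ext_non_square_null_or_conull by blast
  moreover have "- F_ext c \<Psi> (\<lambda>_. True) \<subseteq> - F_ext c \<Psi> (in_div_class l \<kappa>)"
    using F_ext_mono[of _ "\<lambda>_. True"] by blast
  ultimately show ?thesis using negligible_subset by blast
next
  case False
  show ?thesis
  proof (rule translation_invariant_null_or_conull[OF F_ext_lebesgue F_ext_periodic])
    show "infinite {l :: nat. prime l}" by (rule primes_infinite)
    show "0 \<notin> {l :: nat. prime l}" by simp
  qed (use False in \<open>auto intro!: F_ext_almost_translation_invariant\<close>)
qed

lemma unit_cube_mat_null_or_full:
  fixes S :: "(real^'m^'n) set"
  assumes S: "S \<in> sets lebesgue" and "negligible S \<or> negligible (- S)"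
  shows "emeasure lebesgue (S \<inter> unit_cube_mat) = 0 \<or> emeasure lebesgue (S \<inter> unit_cube_mat) = 1"
  using assms(2)
proof
  assume "negligible S"
  then have "negligible (S \<inter> unit_cube_mat)" using negligible_subset by blast
  moreover have "S \<inter> unit_cube_mat \<in> sets lebesgue"
    using S by (simp add: unit_cube_mat_cbox fmeasurableD sets.Int)
  ultimately show ?thesis by (simp add: negligible_iff_emeasure0)
next
  assume "negligible (- S)"
  then have "emeasure lebesgue (unit_cube_mat - - S) = emeasure lebesgue (unit_cube_mat :: (real^'m^'n) set)"
    by (intro emeasure_Diff_null_set) (auto simp: negligible_iff_null_sets unit_cube_mat_cbox)
  moreover have "unit_cube_mat - - S = S \<inter> unit_cube_mat" by blast
  ultimately show ?thesis
    by (simp add: unit_cube_mat_cbox emeasure_lborel_cbox_eq emeasure_completion)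
qed

text \<open>The main theorem: \<open>F = F_ext \<inter> [0,1]\<^sup>n\<^sup>m\<close>, and \<open>F_ext\<close> is measurable and null or conull.\<close>
theorem mainTheorem7:
  fixes \<Psi> :: "'m::finite \<Rightarrow> int^'n::finite \<Rightarrow> real"
    and c :: coprimality
  assumes "\<And>j q. \<Psi> j q > 0"
  shows "F_set c \<Psi> \<in> sets lebesgue \<and>
         (emeasure lebesgue (F_set c \<Psi>) = 0 \<or> emeasure lebesgue (F_set c \<Psi>) = 1)"
proof
  have cube: "unit_cube_mat \<in> sets lebesgue" by (simp add: unit_cube_mat_cbox fmeasurableD)
  show "F_set c \<Psi> \<in> sets lebesgue"
    unfolding F_set_eq_F_ext using F_ext_lebesgue cube by (rule sets.Int)
  show "emeasure lebesgue (F_set c \<Psi>) = 0 \<or> emeasure lebesgue (F_set c \<Psi>) = 1"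
    unfolding F_set_eq_F_ext by (rule unit_cube_mat_null_or_full[OF F_ext_lebesgue F_ext_null_or_conull])
qed

end
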